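(* Let $\tau$ be a $T_1$-topology on $\mathcal{C}(p,q)$ such that $(\mathcal{C}(p,q),\tau)$ is a topological inverse semigroup. If there exists an idempotent $q^ip^i\in\mathcal{C}(p,q)$ such that the subspace $E(\mathcal{C}(p,q))$ is quasi-regular at $q^ip^i$, then $\tau$ is discrete.
   Context: The bicyclic monoid $\mathcal{C}(p,q)$ is the monoid generated by $p,q$ subject only to $pq=1$; elements are uniquely $q^ip^j$, $i,j\in\omega$, with multiplication $q^kp^l\cdot q^mp^n = q^{k-l+m}p^n$ if $l<m$, $=q^kp^n$ if $l=m$, $=q^kp^{l-m+n}$ if $l>m$, and inversion $(q^ip^j)^{-1}=q^jp^i$. $E(\mathcal{C}(p,q))=\{q^ip^i:i\in\omega\}$ is the set of idempotents. A topological inverse semigroup: multiplication jointly continuous and inversion continuous. A subspace $Y$ is quasi-regular at $x\in Y$ if for every open neighbourhood $U$ of $x$ in $Y$ there is a nonempty open $V\subseteq Y$ with $\mathrm{cl}_Y(V)\subseteq U$. *)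

theory Defs
  imports "HOL-Analysis.Analysis"
begin

text \<open>The bicyclic monoid C(p,q): the element q^i p^j is represented by the pair (i,j).\<close>

type_synonym bicyclic = "nat \<times> nat"

definition bmult :: "bicyclic \<Rightarrow> bicyclic \<Rightarrow> bicyclic" where
  "bmult x y = (case x of (k,l) \<Rightarrow> case y of (m,n) \<Rightarrow>
     if l < m then (k + m - l, n)
     else if l = m then (k, n)
     else (k, l - m + n))"

definition binv :: "bicyclic \<Rightarrow> bicyclic" where
  "binv x = (case x of (i,j) \<Rightarrow> (j,i))"

definition bidem :: "bicyclic set" where
  "bidem = {(i,i) | i. True}"

definition top_inverse_semigroup_bicyclic :: "bicyclic topology \<Rightarrow> bool" where
  "top_inverse_semigroup_bicyclic T \<longleftrightarrow>
     topspace T = UNIV \<and>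
     continuous_map (prod_topology T T) T (\<lambda>z. bmult (fst z) (snd z)) \<and>
     continuous_map T T binv"

definition quasi_regular_at :: "'a topology \<Rightarrow> 'a set \<Rightarrow> 'a \<Rightarrow> bool" where
  "quasi_regular_at X Y x \<longleftrightarrow>
     (\<forall>U. openin (subtopology X Y) U \<and> x \<in> U \<longrightarrow>
        (\<exists>V. openin (subtopology X Y) V \<and> V \<noteq> {} \<and>
             (subtopology X Y) closure_of V \<subseteq> U))"

end

theory Submission
  imports Defs
begin

text \<open>
  If some idempotent is isolated, every point is isolated: each singleton is the preimage of an
  isolated idempotent under a two-sided translation \<open>x \<mapsto> a x c\<close>, up to a \<open>T\<^sub>1\<close> step that
  separates \<open>1\<close> from \<open>qp\<close>.  Otherwise no idempotent is isolated even in \<open>E\<close>, because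
  \<open>x \<mapsto> x x\<inverse>\<close> and \<open>x \<mapsto> x\<inverse> x\<close> are continuous and map \<open>q\<^sup>a p\<^sup>b\<close> to \<open>q\<^sup>a p\<^sup>a\<close> and \<open>q\<^sup>b p\<^sup>b\<close>;
  removing finitely many closed points then shows that every neighbourhood of an idempotent contains
  idempotents \<open>q\<^sup>n p\<^sup>n\<close> with arbitrarily large \<open>n\<close>.  As \<open>q\<^sup>n p\<^sup>n \<cdot> q\<^sup>v p\<^sup>v = q\<^sup>n p\<^sup>n\<close> for
  \<open>n \<ge> v\<close>, continuity of \<open>x \<mapsto> x \<cdot> q\<^sup>v p\<^sup>v\<close> makes every nonempty open subset of \<open>E\<close> dense in
  \<open>E\<close>, so \<open>E\<close> is quasi-regular at no point.
\<close>

lemma bmult_binv_right: "bmult x (binv x) = (fst x, fst x)"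
  by (cases x) (simp add: bmult_def binv_def)

lemma bmult_binv_left: "bmult (binv x) x = (snd x, snd x)"
  by (cases x) (simp add: bmult_def binv_def)

lemma bmult_idempotents_le: "m \<le> n \<Longrightarrow> bmult (m, m) (n, n) = (n, n)"
  and bmult_idempotents_ge: "n \<le> m \<Longrightarrow> bmult (m, m) (n, n) = (m, m)"
  by (auto simp: bmult_def)

lemma vimage_shift_singleton:
  "(\<lambda>x. bmult (k, 0) (bmult x (0, k))) -` {(a + k, b + k)} = {(a, b)}"
  by (auto simp: bmult_def split: if_splits)

lemma vimage_translation_idempotent_Suc:
  "(\<lambda>x. bmult (0, a) (bmult x (b, 0))) -` {(Suc k, Suc k)} = {(Suc k + a, Suc k + b)}"
  by (auto simp: bmult_def split: if_splits)

lemma vimage_translation_idempotent_0: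
  "(\<lambda>x. bmult (0, 1) (bmult x (1, 0))) -` {(0, 0)} = {(0, 0), (1, 1)}"
  by (auto simp: bmult_def split: if_splits)

locale bicyclic_topology =
  fixes T :: "bicyclic topology"
  assumes top_inverse_semigroup: "top_inverse_semigroup_bicyclic T"
begin

lemma topspace_eq [simp]: "topspace T = UNIV"
  using top_inverse_semigroup by (simp add: top_inverse_semigroup_bicyclic_def)

lemma continuous_map_binv: "continuous_map T T binv"
  using top_inverse_semigroup by (simp add: top_inverse_semigroup_bicyclic_def)

lemma continuous_map_bmult_prod:
  "continuous_map (prod_topology T T) T (\<lambda>z. bmult (fst z) (snd z))"
  using top_inverse_semigroup unfolding top_inverse_semigroup_bicyclic_def by blast

lemma continuous_map_bmult:
  assumes "continuous_map T T f" "continuous_map T T g"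
  shows "continuous_map T T (\<lambda>x. bmult (f x) (g x))"
proof -
  have "continuous_map T (prod_topology T T) (\<lambda>x. (f x, g x))"
    using assms by (simp add: continuous_map_paired)
  from continuous_map_compose[OF this continuous_map_bmult_prod] show ?thesis
    by (simp add: o_def)
qed

lemma openin_vimage: "continuous_map T T f \<Longrightarrow> openin T W \<Longrightarrow> openin T (f -` W)"
  using openin_continuous_map_preimage[of T T f W] by (simp add: vimage_def)

lemma openin_translation_vimage:
  "openin T W \<Longrightarrow> openin T ((\<lambda>x. bmult a (bmult x c)) -` W)"
  by (intro openin_vimage continuous_map_bmult continuous_map_const[THEN iffD2]) auto

lemma openin_singleton_shift: "openin T {(a + k, b + k)} \<Longrightarrow> openin T {(a, b)}"
  using openin_translation_vimage[of "{(a + k, b + k)}" "(k, 0)" "(0, k)"]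
  by (simp only: vimage_shift_singleton)

lemma discrete_if_openin_idempotent:
  assumes t1: "t1_space T" and "openin T {(k, k)}"
  shows "T = discrete_topology UNIV"
proof -
  have "openin T {(0, 0)}"
    using openin_singleton_shift[of 0 k 0] assms(2) by simp
  then have "openin T {(0, 0), (1, 1)}"
    using openin_translation_vimage[of "{(0, 0)}" "(0, 1)" "(1, 0)"]
    by (simp only: vimage_translation_idempotent_0)
  then have "openin T ({(0, 0), (1, 1)} - {(0, 0)})"
    using t1 by (intro openin_diff) (simp_all add: t1_space_closedin_singleton)
  then have "openin T {(Suc 0, Suc 0)}"
    by (simp add: insert_Diff_if)
  then have "openin T {(a + 1, b + 1)}" for a b
    using openin_translation_vimage[of "{(Suc 0, Suc 0)}" "(0, a)" "(b, 0)"]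
    by (simp add: vimage_translation_idempotent_Suc)
  then have "openin T {x}" for x
    using openin_singleton_shift[of "fst x" 1 "snd x"] by simp
  then show ?thesis
    by (simp add: eq_commute[of T] discrete_topology_unique)
qed

lemma openin_idempotent_if_isolated_in_bidem:
  assumes "openin T W" "W \<inter> bidem = {(k, k)}"
  shows "openin T {(k, k)}"
proof -
  have "openin T ((\<lambda>x. bmult x (binv x)) -` W \<inter> (\<lambda>x. bmult (binv x) x) -` W)"
    by (intro openin_Int openin_vimage continuous_map_bmult continuous_map_binv
        continuous_map_id[unfolded id_def] assms(1))
  moreover have "(j, j) \<in> W \<longleftrightarrow> j = k" for j
    using assms(2) by (auto simp: bidem_def)
  then have "(\<lambda>x. bmult x (binv x)) -` W \<inter> (\<lambda>x. bmult (binv x) x) -` W = {(k, k)}"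
    by (intro set_eqI) (simp add: bmult_binv_right bmult_binv_left prod_eq_iff)
  ultimately show ?thesis
    by simp
qed

lemma idempotents_unbounded_in_open:
  assumes t1: "t1_space T" and no_isolated: "\<And>k. \<not> openin T {(k, k)}"
    and W: "openin T W" "(k, k) \<in> W"
  shows "\<exists>n\<ge>N. (n, n) \<in> W"
proof (rule ccontr)
  assume "\<not> ?thesis"
  then have bounded: "(n, n) \<in> W \<Longrightarrow> n < N" for n
    by (meson not_le)
  let ?F = "(\<lambda>j. (j, j)) ` ({..<N} - {k})"
  have "openin T (W - ?F)"
    using t1 by (intro openin_diff W(1)) (simp add: t1_space_closedin_finite)
  moreover have "(W - ?F) \<inter> bidem = {(k, k)}"
    using bounded W(2) by (auto simp: bidem_def)
  ultimately show False
    using openin_idempotent_if_isolated_in_bidem no_isolated by blast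
qed

lemma idempotent_in_closure_of_open:
  assumes t1: "t1_space T" and no_isolated: "\<And>k. \<not> openin T {(k, k)}"
    and W: "openin T W" "(j, j) \<in> W"
  shows "(m, m) \<in> T closure_of (W \<inter> bidem)"
  unfolding in_closure_of
proof (intro conjI allI impI)
  fix N assume N: "(m, m) \<in> N \<and> openin T N"
  obtain v where v: "m \<le> v" "(v, v) \<in> W"
    using idempotents_unbounded_in_open[OF t1 no_isolated W] by blast
  let ?A = "(\<lambda>x. bmult x (v, v)) -` W"
  have "openin T (?A \<inter> N)"
    using N W(1)
    by (intro openin_Int openin_vimage continuous_map_bmult continuous_map_id[unfolded id_def]
        continuous_map_const[THEN iffD2]) auto
  moreover have "(m, m) \<in> ?A \<inter> N"
    using N v by (simp add: bmult_idempotents_le)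
  ultimately obtain n where n: "v \<le> n" "(n, n) \<in> ?A \<inter> N"
    using idempotents_unbounded_in_open[OF t1 no_isolated] by blast
  then show "\<exists>y. y \<in> W \<inter> bidem \<and> y \<in> N"
    by (intro exI[of _ "(n, n)"]) (auto simp: bmult_idempotents_ge bidem_def)
qed simp

lemma not_quasi_regular_at_idempotent:
  assumes t1: "t1_space T" and no_isolated: "\<And>k. \<not> openin T {(k, k)}"
  shows "\<not> quasi_regular_at T bidem (i, i)"
proof
  assume qr: "quasi_regular_at T bidem (i, i)"
  let ?m = "Suc i"
  have "openin T (- {(?m, ?m)})"
    using t1 by (simp add: t1_space_closedin_singleton closedin_def Compl_eq_Diff_UNIV)
  then have "openin (subtopology T bidem) (bidem \<inter> - {(?m, ?m)})"
    by (rule openin_subtopology_Int2)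
  moreover have "(i, i) \<in> bidem \<inter> - {(?m, ?m)}"
    by (simp add: bidem_def)
  ultimately obtain V where V: "openin (subtopology T bidem) V" "V \<noteq> {}"
      "subtopology T bidem closure_of V \<subseteq> bidem \<inter> - {(?m, ?m)}"
    using qr unfolding quasi_regular_at_def by blast
  obtain W where W: "openin T W" "V = W \<inter> bidem"
    using V(1) by (auto simp: openin_subtopology)
  obtain j where "(j, j) \<in> W"
    using V(2) W(2) by (auto simp: bidem_def)
  then have "(?m, ?m) \<in> T closure_of (W \<inter> bidem)"
    by (rule idempotent_in_closure_of_open[OF t1 no_isolated W(1)])
  then have "(?m, ?m) \<in> subtopology T bidem closure_of V"
    using W(2) by (auto simp: closure_of_subtopology bidem_def Int_absorb1)
  with V(3) show False
    by blast
qed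

end

theorem proposition4:
  fixes T :: "bicyclic topology"
  assumes "t1_space T"
    and "top_inverse_semigroup_bicyclic T"
    and "\<exists>i. quasi_regular_at T bidem (i, i)"
  shows "T = discrete_topology UNIV"
proof -
  interpret bicyclic_topology T
    using assms(2) by unfold_locales
  obtain k where "openin T {(k, k)}"
    using assms(3) not_quasi_regular_at_idempotent[OF assms(1)] by blast
  with assms(1) show ?thesis
    by (rule discrete_if_openin_idempotent)
qed

end
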